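(* Let $G$ be a finite nested group with chain of centers $G=X_0>X_1>\dots>X_n\ge1$. Then $X_i/[X_i,G]=Z(G/[X_i,G])$ for every $i=0,\dots,n$.
   Context: For $\chi\in\mathrm{Irr}(G)$, $Z(\chi)=\{g\in G: |\chi(g)|=\chi(1)\}$. $G$ is nested if for all $\chi,\psi\in\mathrm{Irr}(G)$ either $Z(\chi)\le Z(\psi)$ or $Z(\psi)\le Z(\chi)$; then the distinct subgroups $Z(\chi)$, $\chi\in\mathrm{Irr}(G)$, form a chain $G=X_0>X_1>\dots>X_n\ge1$, the chain of centers. *)

theory Defs
  imports "HOL-Algebra.Algebra" "Jordan_Normal_Form.Matrix"
begin

definition mat_trace :: "complex mat \<Rightarrow> complex" where
  "mat_trace A = (\<Sum>i<dim_row A. A $$ (i, i))"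

definition is_rep :: "('g, 'b) monoid_scheme \<Rightarrow> nat \<Rightarrow> ('g \<Rightarrow> complex mat) \<Rightarrow> bool" where
  "is_rep G d \<rho> \<longleftrightarrow>
     (\<forall>g\<in>carrier G. \<rho> g \<in> carrier_mat d d) \<and>
     \<rho> \<one>\<^bsub>G\<^esub> = 1\<^sub>m d \<and>
     (\<forall>g\<in>carrier G. \<forall>h\<in>carrier G. \<rho> (g \<otimes>\<^bsub>G\<^esub> h) = \<rho> g * \<rho> h)"

definition is_subspace :: "nat \<Rightarrow> complex vec set \<Rightarrow> bool" where
  "is_subspace d W \<longleftrightarrow> W \<subseteq> carrier_vec d \<and> 0\<^sub>v d \<in> W \<and>
     (\<forall>v\<in>W. \<forall>w\<in>W. v + w \<in> W) \<and> (\<forall>c. \<forall>v\<in>W. c \<cdot>\<^sub>v v \<in> W)"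

definition is_irr_rep :: "('g, 'b) monoid_scheme \<Rightarrow> nat \<Rightarrow> ('g \<Rightarrow> complex mat) \<Rightarrow> bool" where
  "is_irr_rep G d \<rho> \<longleftrightarrow> is_rep G d \<rho> \<and> d > 0 \<and>
     (\<forall>W. is_subspace d W \<and> (\<forall>g\<in>carrier G. \<forall>w\<in>W. \<rho> g *\<^sub>v w \<in> W)
          \<longrightarrow> W = {0\<^sub>v d} \<or> W = carrier_vec d)"

definition Irr :: "('g, 'b) monoid_scheme \<Rightarrow> ('g \<Rightarrow> complex) set" where
  "Irr G = {\<chi>. \<exists>d \<rho>. is_irr_rep G d \<rho> \<and> (\<forall>g\<in>carrier G. \<chi> g = mat_trace (\<rho> g))}"

definition char_center :: "('g, 'b) monoid_scheme \<Rightarrow> ('g \<Rightarrow> complex) \<Rightarrow> 'g set" where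
  "char_center G \<chi> = {g \<in> carrier G. complex_of_real (cmod (\<chi> g)) = \<chi> \<one>\<^bsub>G\<^esub>}"

definition nested :: "('g, 'b) monoid_scheme \<Rightarrow> bool" where
  "nested G \<longleftrightarrow> (\<forall>\<chi>\<in>Irr G. \<forall>\<psi>\<in>Irr G.
      char_center G \<chi> \<subseteq> char_center G \<psi> \<or> char_center G \<psi> \<subseteq> char_center G \<chi>)"

definition comm_subgroup :: "('g, 'b) monoid_scheme \<Rightarrow> 'g set \<Rightarrow> 'g set \<Rightarrow> 'g set" where
  "comm_subgroup G H K = generate G
     {h \<otimes>\<^bsub>G\<^esub> k \<otimes>\<^bsub>G\<^esub> inv\<^bsub>G\<^esub> h \<otimes>\<^bsub>G\<^esub> inv\<^bsub>G\<^esub> k | h k. h \<in> H \<and> k \<in> K}"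

definition group_center :: "('g, 'b) monoid_scheme \<Rightarrow> 'g set" where
  "group_center G = {z \<in> carrier G. \<forall>g\<in>carrier G. z \<otimes>\<^bsub>G\<^esub> g = g \<otimes>\<^bsub>G\<^esub> z}"

end

theory Submission
  imports Defs "Jordan_Normal_Form.Jordan_Normal_Form_Existence" "Jordan_Normal_Form.Spectral_Radius"
begin

text \<open>
  Let \<open>\<chi>\<close> be afforded by the irreducible representation \<open>\<rho>\<close> of degree \<open>d\<close>. An element \<open>g\<close>
  lies in \<open>Z(\<chi>)\<close> iff \<open>\<rho> g\<close> is scalar: \<open>\<rho> g\<close> is diagonalisable with roots of unity as
  eigenvalues, and \<open>|\<chi> g| = d\<close> forces them all to coincide. Hence \<open>[Z(\<chi>), G] \<subseteq> ker \<rho>\<close>.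
  Cosets of \<open>Z(\<chi>)\<close> are central in \<open>G/[Z(\<chi>),G]\<close> by construction; conversely, if
  \<open>g[Z(\<chi>),G]\<close> is central, every commutator \<open>[g,h]\<close> lies in \<open>ker \<rho>\<close>, so \<open>\<rho> g\<close> commutes
  with \<open>\<rho>(G)\<close> and is scalar by Schur's lemma.
\<close>

subsection \<open>Block diagonal, Jordan and scalar matrices\<close>

lemma diag_block_mat_eq_one_mat:
  fixes Bs :: "'a :: zero_neq_one mat list"
  assumes "Ball (set Bs) square_mat" "diag_block_mat Bs = 1\<^sub>m k" "B \<in> set Bs"
  shows "B = 1\<^sub>m (dim_row B)"
  using assms
proof (induct Bs arbitrary: k)
  case Nil then show ?case by simp
next
  case (Cons B' Bs)
  define D where "D = diag_block_mat Bs"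
  have sqD: "square_mat D" unfolding D_def using Cons(2) diag_block_mat_square by auto
  have sqB: "dim_col B' = dim_row B'" using Cons(2) by auto
  let ?F = "four_block_mat B' (0\<^sub>m (dim_row B') (dim_col D)) (0\<^sub>m (dim_row D) (dim_col B')) D"
  have F: "?F = 1\<^sub>m k" using Cons(3) unfolding D_def by (simp add: Let_def)
  have k: "k = dim_row B' + dim_row D" using arg_cong[OF F, of dim_row] by simp
  have entry: "\<And>i j. i < k \<Longrightarrow> j < k \<Longrightarrow> ?F $$ (i,j) = 1\<^sub>m k $$ (i,j)"
    using F by simp
  have B': "B' = 1\<^sub>m (dim_row B')"
  proof (rule eq_matI)
    fix i j assume "i < dim_row (1\<^sub>m (dim_row B') :: 'a mat)" "j < dim_col (1\<^sub>m (dim_row B') :: 'a mat)"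
    then show "B' $$ (i, j) = 1\<^sub>m (dim_row B') $$ (i, j)"
      using entry[of i j] sqB sqD k by simp
  qed (use sqB in auto)
  have D: "D = 1\<^sub>m (dim_row D)"
  proof (rule eq_matI)
    fix i j assume "i < dim_row (1\<^sub>m (dim_row D) :: 'a mat)" "j < dim_col (1\<^sub>m (dim_row D) :: 'a mat)"
    then show "D $$ (i, j) = 1\<^sub>m (dim_row D) $$ (i, j)"
      using entry[of "i + dim_row B'" "j + dim_row B'"] sqB sqD k by simp
  qed (use sqD in auto)
  from Cons(4) consider "B = B'" | "B \<in> set Bs" by auto
  then show ?case
  proof cases
    case 2
    then show ?thesis using Cons(1)[of "dim_row D"] Cons(2) D unfolding D_def by auto
  qed (use B' in simp)
qed

lemma diag_block_mat_smult_one_mat: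
  fixes c :: "'a :: semiring_1"
  assumes "\<And>B. B \<in> set Bs \<Longrightarrow> B = c \<cdot>\<^sub>m 1\<^sub>m (dim_row B)"
  shows "diag_block_mat Bs = c \<cdot>\<^sub>m 1\<^sub>m (sum_list (map dim_row Bs))"
  using assms
proof (induct Bs)
  case Nil then show ?case by (auto intro!: eq_matI)
next
  case (Cons B Bs)
  have IH: "diag_block_mat Bs = c \<cdot>\<^sub>m 1\<^sub>m (sum_list (map dim_row Bs))" using Cons by auto
  have B: "B = c \<cdot>\<^sub>m 1\<^sub>m (dim_row B)" using Cons by auto
  then have "dim_col B = dim_row B" by (metis dim_col_mat(1) index_smult_mat(3) index_one_mat(3))
  then show ?case
    by (subst B) (auto simp: Let_def IH intro!: eq_matI)
qed

lemma jordan_block_pow_eq_one_mat: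
  fixes a :: "'a :: {idom, ring_char_0}"
  assumes "n > 0" "m > 0" "jordan_block n a ^\<^sub>m m = 1\<^sub>m n"
  shows "n = 1 \<and> a ^ m = 1"
proof -
  have "a ^ m = 1"
    using arg_cong[OF assms(3), of "\<lambda>M. M $$ (0, 0)"] assms(1) unfolding jordan_block_pow by simp
  moreover have "n \<le> 1"
  proof (rule ccontr)
    assume "\<not> n \<le> 1"
    then have "of_nat m * a ^ (m - 1) = (0 :: 'a)"
      using arg_cong[OF assms(3), of "\<lambda>M. M $$ (0, 1)"] unfolding jordan_block_pow by simp
    moreover have "a \<noteq> 0" using \<open>a ^ m = 1\<close> assms(2) by (metis power_0_left zero_neq_one not_gr0)
    ultimately show False using assms(2) by simp
  qed
  ultimately show ?thesis using assms(1) by simp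
qed

lemma jordan_nf_pow_eq_one_mat:
  fixes A :: "'a :: {idom, ring_char_0} mat"
  assumes "jordan_nf A n_as" "A \<in> carrier_mat d d" "m > 0" "A ^\<^sub>m m = 1\<^sub>m d" "(n, a) \<in> set n_as"
  shows "n = 1 \<and> a ^ m = 1"
proof -
  from assms(1) obtain P Q where wit: "similar_mat_wit A (jordan_matrix n_as) P Q"
    unfolding jordan_nf_def similar_mat_def by blast
  note PQ = similar_mat_witD2[OF assms(2) wit]
  have "jordan_matrix n_as ^\<^sub>m m = Q * A ^\<^sub>m m * P"
    using similar_mat_wit_pow_id[OF similar_mat_wit_sym[OF wit]] .
  also have "\<dots> = 1\<^sub>m d" using assms(4) PQ(2,6,7) by simp
  finally have J: "diag_block_mat (map (\<lambda>(n, a). jordan_block n a ^\<^sub>m m) n_as) = 1\<^sub>m d"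
    unfolding jordan_matrix_pow .
  have "Ball (set (map (\<lambda>(n, a). jordan_block n a ^\<^sub>m m) n_as)) square_mat" by auto
  moreover have "jordan_block n a ^\<^sub>m m \<in> set (map (\<lambda>(n, a). jordan_block n a ^\<^sub>m m) n_as)"
    using assms(5) by force
  ultimately have "jordan_block n a ^\<^sub>m m = 1\<^sub>m (dim_row (jordan_block n a ^\<^sub>m m))"
    using diag_block_mat_eq_one_mat J by blast
  then have "jordan_block n a ^\<^sub>m m = 1\<^sub>m n" by simp
  moreover have "n > 0" using assms(1,5) unfolding jordan_nf_def by force
  ultimately show ?thesis using jordan_block_pow_eq_one_mat assms(3) by blast
qed

lemma similar_mat_smult_one_mat:
  fixes c :: "'a :: comm_ring_1"
  assumes "similar_mat A (c \<cdot>\<^sub>m 1\<^sub>m n)"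
  shows "A = c \<cdot>\<^sub>m 1\<^sub>m n"
proof -
  from assms obtain P Q where wit: "similar_mat_wit A (c \<cdot>\<^sub>m 1\<^sub>m n) P Q"
    unfolding similar_mat_def by blast
  have "dim_row A = n"
    using carrier_matD(1)[OF similar_mat_witD(5)[OF refl wit]] by simp
  note PQ = similar_mat_witD[OF this[symmetric] wit]
  have "P * (c \<cdot>\<^sub>m 1\<^sub>m n) = c \<cdot>\<^sub>m P"
    using mult_smult_distrib[OF PQ(6) one_carrier_mat[of n], of c] PQ(6) by simp
  then have "A = c \<cdot>\<^sub>m (P * Q)"
    using PQ(3) mult_smult_assoc_mat[OF PQ(6,7)] by simp
  then show ?thesis using PQ(1) by simp
qed

lemma jordan_matrix_eq_smult_one_mat:
  fixes c :: "'a :: semiring_1"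
  assumes "\<forall>(n, a) \<in> set n_as. n = 1 \<and> a = c"
  shows "jordan_matrix n_as = c \<cdot>\<^sub>m 1\<^sub>m (length n_as)"
proof -
  have "jordan_matrix n_as = c \<cdot>\<^sub>m 1\<^sub>m (sum_list (map dim_row (map (\<lambda>(n, a). jordan_block n a) n_as)))"
    unfolding jordan_matrix_def
    by (rule diag_block_mat_smult_one_mat) (use assms in \<open>auto intro!: eq_matI\<close>)
  also have "sum_list (map dim_row (map (\<lambda>(n, a). jordan_block n a) n_as)) = length n_as"
    using assms by (induct n_as) auto
  finally show ?thesis .
qed

lemma smult_one_mat_mult_comm:
  fixes A :: "'a :: comm_ring_1 mat"
  assumes "A \<in> carrier_mat d d"
  shows "(c \<cdot>\<^sub>m 1\<^sub>m d) * A = A * (c \<cdot>\<^sub>m 1\<^sub>m d)"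
proof -
  have "(c \<cdot>\<^sub>m 1\<^sub>m d) * A = c \<cdot>\<^sub>m (1\<^sub>m d * A)"
    using assms by (intro mult_smult_assoc_mat) auto
  also have "\<dots> = c \<cdot>\<^sub>m (A * 1\<^sub>m d)" using assms by simp
  also have "\<dots> = A * (c \<cdot>\<^sub>m 1\<^sub>m d)"
    using assms by (intro mult_smult_distrib[symmetric]) auto
  finally show ?thesis .
qed

lemma smult_one_mat_pow: "(c \<cdot>\<^sub>m 1\<^sub>m d) ^\<^sub>m n = (c ^ n) \<cdot>\<^sub>m (1\<^sub>m d :: 'a :: comm_ring_1 mat)"
proof (induct n)
  case 0 then show ?case by (auto intro!: eq_matI)
next
  case (Suc n) then show ?case by (auto intro!: eq_matI simp: mult_smult_distrib)
qed

lemma mat_trace_smult_one_mat: "mat_trace (c \<cdot>\<^sub>m 1\<^sub>m d) = c * of_nat d"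
  unfolding mat_trace_def by simp

lemma mat_trace_mult_comm:
  assumes "A \<in> carrier_mat n k" "B \<in> carrier_mat k n"
  shows "mat_trace (A * B) = mat_trace (B * A)"
proof -
  have "mat_trace (A * B) = (\<Sum>i<n. \<Sum>j<k. A $$ (i,j) * B $$ (j,i))"
    unfolding mat_trace_def using assms by (simp add: scalar_prod_def lessThan_atLeast0)
  also have "\<dots> = (\<Sum>j<k. \<Sum>i<n. B $$ (j,i) * A $$ (i,j))"
    by (subst sum.swap) (simp add: mult.commute)
  also have "\<dots> = mat_trace (B * A)"
    unfolding mat_trace_def using assms by (simp add: scalar_prod_def lessThan_atLeast0)
  finally show ?thesis .
qed

lemma mat_trace_similar:
  assumes "similar_mat A B"
  shows "mat_trace A = mat_trace B"
proof -
  from assms obtain P Q where wit: "similar_mat_wit A B P Q"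
    unfolding similar_mat_def by blast
  note PQ = similar_mat_witD[OF refl wit]
  have "mat_trace A = mat_trace ((P * B) * Q)" using PQ(3) by simp
  also have "\<dots> = mat_trace (Q * (P * B))"
    using mat_trace_mult_comm[OF mult_carrier_mat[OF PQ(6,5)] PQ(7)] .
  also have "Q * (P * B) = (Q * P) * B" using PQ(5-7) by (simp add: assoc_mult_mat)
  also have "\<dots> = B" using PQ(2,5) by simp
  finally show ?thesis .
qed

lemma mat_trace_jordan_matrix:
  assumes "\<forall>(n, a) \<in> set n_as. n = 1"
  shows "mat_trace (jordan_matrix n_as) = sum_list (map snd n_as)"
  using assms
proof (induct n_as)
  case Nil then show ?case by (simp add: mat_trace_def jordan_matrix_def)
next
  case (Cons na n_as)
  then obtain a where na: "na = (1, a)" by (cases na) auto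
  let ?J = "jordan_matrix n_as"
  have "mat_trace (jordan_matrix (na # n_as)) = (\<Sum>i<Suc (dim_row ?J).
      four_block_mat (jordan_block 1 a) (0\<^sub>m 1 (dim_col ?J)) (0\<^sub>m (dim_row ?J) 1) ?J $$ (i, i))"
    unfolding mat_trace_def na by (simp add: jordan_matrix_def Let_def)
  also have "\<dots> = a + mat_trace ?J"
    unfolding sum.lessThan_Suc_shift mat_trace_def by simp
  finally show ?case using Cons na by simp
qed

lemma unit_complex_sum_list_norm_eq_length_imp_eq:
  fixes xs :: "complex list"
  assumes unit: "\<forall>a \<in> set xs. cmod a = 1" and sum: "cmod (sum_list xs) = length xs"
    and a: "a \<in> set xs"
  shows "a = sum_list xs / of_nat (length xs)"
proof -
  define c where "c = sum_list xs / of_nat (length xs)"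
  have len: "length xs > 0" using a by (cases xs) auto
  have c: "cmod c = 1" unfolding c_def using sum len by (simp add: norm_divide)
  then have cc: "c * cnj c = 1" using complex_norm_square[of c] by simp
  define r where "r x = Re (x * cnj c)" for x
  have r_le: "r x \<le> 1" if "x \<in> set xs" for x
    using complex_Re_le_cmod[of "x * cnj c"] unit that c by (simp add: norm_mult r_def)
  have "(\<Sum>x\<leftarrow>xs. r x) = Re (sum_list xs * cnj c)"
    unfolding r_def by (induct xs) (auto simp: distrib_right)
  also have "\<dots> = length xs"
    unfolding c_def using len cc by (simp add: c_def)
  finally have "sum_list (map (\<lambda>x. 1 - r x) xs) = 0"
    by (simp add: sum_list_subtractf sum_list_triv)
  then have "\<forall>y \<in> set (map (\<lambda>x. 1 - r x) xs). y = 0"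
    using r_le by (subst (asm) sum_list_nonneg_eq_0_iff) auto
  then have "Re (a * cnj c) = 1" using a unfolding r_def by auto
  moreover have "cmod (a * cnj c) = 1" using unit a c by (simp add: norm_mult)
  ultimately have "a * cnj c = 1"
    using cmod_power2[of "a * cnj c"] by (simp add: complex_eq_iff)
  then have "a = c" using cc by (metis mult.assoc mult.commute mult.right_neutral)
  then show ?thesis unfolding c_def .
qed

text \<open>The Jordan form is diagonal with roots of unity on the diagonal, which must all be equal.\<close>

lemma scalar_if_pow_eq_one_norm_mat_trace:
  fixes A :: "complex mat"
  assumes A: "A \<in> carrier_mat d d" and m: "m > 0" and pow: "A ^\<^sub>m m = 1\<^sub>m d"
    and tr: "cmod (mat_trace A) = d"
  shows "\<exists>c. A = c \<cdot>\<^sub>m 1\<^sub>m d"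
proof -
  obtain as where "char_poly A = (\<Prod>a\<leftarrow>as. [:- a, 1:])"
    using char_poly_factorized[OF A] by blast
  from jordan_nf_exists[OF A this] obtain n_as where jnf: "jordan_nf A n_as" by blast
  have blocks: "n = 1 \<and> a ^ m = 1" if "(n, a) \<in> set n_as" for n a
    using jordan_nf_pow_eq_one_mat[OF jnf A m pow that] .
  have ones: "\<forall>(n, a) \<in> set n_as. n = 1" using blocks by auto
  have sim: "similar_mat A (jordan_matrix n_as)" using jnf unfolding jordan_nf_def by blast
  then obtain P Q where "similar_mat_wit A (jordan_matrix n_as) P Q"
    unfolding similar_mat_def by blast
  then have "jordan_matrix n_as \<in> carrier_mat d d" by (rule similar_mat_witD2(5)[OF A])
  then have "d = sum_list (map fst n_as)" using carrier_matD(1) by fastforce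
  also have "\<dots> = length n_as"
    using ones by (induct n_as) auto
  finally have len: "d = length (map snd n_as)" by simp
  have units: "\<forall>a \<in> set (map snd n_as). cmod a = 1"
  proof
    fix a assume "a \<in> set (map snd n_as)"
    then have "cmod a ^ m = 1" using blocks by (force simp: norm_power[symmetric])
    then show "cmod a = 1" using power_eq_imp_eq_base[of "cmod a" m 1] m by simp
  qed
  have "mat_trace A = sum_list (map snd n_as)"
    using mat_trace_similar[OF sim] mat_trace_jordan_matrix[OF ones] by simp
  then have "cmod (sum_list (map snd n_as)) = length (map snd n_as)"
    using tr len by simp
  note equal = unit_complex_sum_list_norm_eq_length_imp_eq[OF units this]
  define c where "c = sum_list (map snd n_as) / of_nat (length (map snd n_as))"
  have "\<forall>(n, a) \<in> set n_as. n = 1 \<and> a = c"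
    using ones equal unfolding c_def by force
  then have "jordan_matrix n_as = c \<cdot>\<^sub>m 1\<^sub>m d"
    using jordan_matrix_eq_smult_one_mat len by simp
  then have "similar_mat A (c \<cdot>\<^sub>m 1\<^sub>m d)" using sim by simp
  then show ?thesis using similar_mat_smult_one_mat by blast
qed

subsection \<open>Commutator subgroups and central cosets\<close>

context group
begin

lemma normal_generateI':
  assumes "H \<subseteq> carrier G"
    and "\<And>h g. \<lbrakk> h \<in> H; g \<in> carrier G \<rbrakk> \<Longrightarrow> g \<otimes> h \<otimes> inv g \<in> generate G H"
  shows "generate G H \<lhd> G"
proof (rule normal_invI[OF generate_is_subgroup[OF assms(1)]])
  fix g h assume g: "g \<in> carrier G"
  show "h \<in> generate G H \<Longrightarrow> g \<otimes> h \<otimes> inv g \<in> generate G H"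
  proof (induct h rule: generate.induct)
    case one then show ?case using g generate.one by simp
  next
    case (incl h) then show ?case using assms(2) g by blast
  next
    case (inv h)
    have "h \<in> carrier G" using inv assms(1) by auto
    then have "g \<otimes> inv h \<otimes> inv g = inv (g \<otimes> h \<otimes> inv g)"
      using g by (simp add: inv_mult_group m_assoc)
    then show ?case using generate_m_inv_closed[OF assms(1) assms(2)[OF inv g]] by simp
  next
    case (eng h1 h2)
    have "h1 \<in> carrier G" "h2 \<in> carrier G"
      using eng(1,3) generate_in_carrier[OF assms(1)] by auto
    then have "g \<otimes> (h1 \<otimes> h2) \<otimes> inv g = (g \<otimes> h1 \<otimes> inv g) \<otimes> (g \<otimes> h2 \<otimes> inv g)"
      using g by (simp add: inv_solve_left m_assoc)
    then show ?case using generate.eng[OF eng(2,4)] by simp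
  qed
qed

lemma comm_subgroup_normal:
  assumes "H \<subseteq> carrier G"
  shows "comm_subgroup G H (carrier G) \<lhd> G"
  unfolding comm_subgroup_def
proof (rule normal_generateI')
  show "{h \<otimes> k \<otimes> inv h \<otimes> inv k | h k. h \<in> H \<and> k \<in> carrier G} \<subseteq> carrier G"
    using assms by auto
next
  fix s x assume "s \<in> {h \<otimes> k \<otimes> inv h \<otimes> inv k | h k. h \<in> H \<and> k \<in> carrier G}"
    and x: "x \<in> carrier G"
  then obtain y k where s: "s = y \<otimes> k \<otimes> inv y \<otimes> inv k" and y: "y \<in> H" and k: "k \<in> carrier G"
    by blast
  have cancel: "inv a \<otimes> (a \<otimes> b) = b" if "a \<in> carrier G" "b \<in> carrier G" for a b
    using that by (simp add: m_assoc[symmetric])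
  have "x \<otimes> s \<otimes> inv x = inv (y \<otimes> x \<otimes> inv y \<otimes> inv x) \<otimes> (y \<otimes> (x \<otimes> k) \<otimes> inv y \<otimes> inv (x \<otimes> k))"
    using x k y assms by (auto simp: s inv_mult_group m_assoc cancel)
  also have "\<dots> \<in> generate G {h \<otimes> k \<otimes> inv h \<otimes> inv k | h k. h \<in> H \<and> k \<in> carrier G}"
    using x k y by (intro generate.eng generate.inv generate.incl) auto
  finally show "x \<otimes> s \<otimes> inv x \<in> generate G {h \<otimes> k \<otimes> inv h \<otimes> inv k | h k. h \<in> H \<and> k \<in> carrier G}" .
qed

lemma rcos_eq_iff_mult_inv_mem:
  assumes "subgroup H G" "x \<in> carrier G" "y \<in> carrier G"
  shows "H #> x = H #> y \<longleftrightarrow> x \<otimes> inv y \<in> H"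
proof -
  have "H #> x = H #> y \<longleftrightarrow> x \<in> H #> y"
    using repr_independence[OF _ assms(3,1)] repr_independenceD[OF assms(1,2)] by metis
  also have "\<dots> \<longleftrightarrow> x \<otimes> inv y \<in> H"
    using subgroup.rcos_module[OF assms(1) is_group assms(3,2)] .
  finally show ?thesis .
qed

lemma rcos_in_group_center_FactGroup_iff:
  assumes "N \<lhd> G" "g \<in> carrier G"
  shows "N #> g \<in> group_center (G Mod N) \<longleftrightarrow> (\<forall>h \<in> carrier G. g \<otimes> h \<otimes> inv g \<otimes> inv h \<in> N)"
proof -
  have sub: "subgroup N G" using assms(1) normal_imp_subgroup by blast
  have commute_iff: "(N #> g) \<otimes>\<^bsub>G Mod N\<^esub> (N #> h) = (N #> h) \<otimes>\<^bsub>G Mod N\<^esub> (N #> g) \<longleftrightarrow>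
      g \<otimes> h \<otimes> inv g \<otimes> inv h \<in> N" if h: "h \<in> carrier G" for h
  proof -
    have "g \<otimes> h \<otimes> inv g \<otimes> inv h = (g \<otimes> h) \<otimes> inv (h \<otimes> g)"
      using assms(2) h by (simp add: inv_mult_group m_assoc)
    then show ?thesis
      using rcos_eq_iff_mult_inv_mem[OF sub, of "g \<otimes> h" "h \<otimes> g"] normal.rcos_sum[OF assms(1)]
        assms(2) h by simp
  qed
  have "N #> g \<in> group_center (G Mod N) \<longleftrightarrow>
      (\<forall>h \<in> carrier G. (N #> g) \<otimes>\<^bsub>G Mod N\<^esub> (N #> h) = (N #> h) \<otimes>\<^bsub>G Mod N\<^esub> (N #> g))"
    using assms(2) unfolding group_center_def carrier_FactGroup by blast
  also have "\<dots> \<longleftrightarrow> (\<forall>h \<in> carrier G. g \<otimes> h \<otimes> inv g \<otimes> inv h \<in> N)"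
    using commute_iff by blast
  finally show ?thesis .
qed

lemma rcos_in_group_center_comm_subgroup:
  assumes "H \<subseteq> carrier G" "y \<in> H"
  shows "comm_subgroup G H (carrier G) #> y \<in> group_center (G Mod comm_subgroup G H (carrier G))"
proof -
  have "y \<otimes> h \<otimes> inv y \<otimes> inv h \<in> comm_subgroup G H (carrier G)" if "h \<in> carrier G" for h
    unfolding comm_subgroup_def using assms(2) that by (blast intro: generate.incl)
  then show ?thesis
    using rcos_in_group_center_FactGroup_iff[OF comm_subgroup_normal[OF assms(1)]] assms by blast
qed

end

subsection \<open>Representations\<close>

lemma eigenspace_is_subspace:
  assumes "M \<in> carrier_mat d d"
  shows "is_subspace d {w \<in> carrier_vec d. M *\<^sub>v w = c \<cdot>\<^sub>v w}"
  unfolding is_subspace_def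
  using assms
  by (auto simp: mult_add_distrib_mat_vec smult_add_distrib_vec mult_mat_vec smult_smult_assoc mult.commute)

lemma mat_eq_smult_one_matI:
  fixes M :: "'a :: comm_ring_1 mat"
  assumes "M \<in> carrier_mat d d" "\<And>w. w \<in> carrier_vec d \<Longrightarrow> M *\<^sub>v w = c \<cdot>\<^sub>v w"
  shows "M = c \<cdot>\<^sub>m 1\<^sub>m d"
proof (rule eq_matI)
  fix i j assume i: "i < dim_row (c \<cdot>\<^sub>m 1\<^sub>m d)" and j: "j < dim_col (c \<cdot>\<^sub>m 1\<^sub>m d)"
  have "(M *\<^sub>v unit_vec d j) $ i = (c \<cdot>\<^sub>v unit_vec d j) $ i" using assms(2) j by simp
  then show "M $$ (i, j) = (c \<cdot>\<^sub>m 1\<^sub>m d) $$ (i, j)" using i j assms(1) by auto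
qed (use assms(1) in auto)

lemma is_repD:
  assumes "is_rep G d \<rho>"
  shows "g \<in> carrier G \<Longrightarrow> \<rho> g \<in> carrier_mat d d" and "\<rho> \<one>\<^bsub>G\<^esub> = 1\<^sub>m d"
    and "g \<in> carrier G \<Longrightarrow> h \<in> carrier G \<Longrightarrow> \<rho> (g \<otimes>\<^bsub>G\<^esub> h) = \<rho> g * \<rho> h"
  using assms unfolding is_rep_def by auto

lemma schur_lemma:
  assumes irr: "is_irr_rep G d \<rho>" and M: "M \<in> carrier_mat d d"
    and comm: "\<And>g. g \<in> carrier G \<Longrightarrow> M * \<rho> g = \<rho> g * M"
  shows "\<exists>c. M = c \<cdot>\<^sub>m 1\<^sub>m d"
proof -
  have "d > 0" and rep: "is_rep G d \<rho>" using irr unfolding is_irr_rep_def by auto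
  note carr = is_repD(1)[OF rep]
  from spectrum_non_empty[OF M \<open>d > 0\<close>] obtain c v where v: "eigenvector M v c"
    unfolding spectrum_def eigenvalue_def by auto
  define W where "W = {w \<in> carrier_vec d. M *\<^sub>v w = c \<cdot>\<^sub>v w}"
  have invariant: "\<rho> g *\<^sub>v w \<in> W" if g: "g \<in> carrier G" and w: "w \<in> W" for g w
  proof -
    have "M *\<^sub>v (\<rho> g *\<^sub>v w) = (M * \<rho> g) *\<^sub>v w" using M carr[OF g] w unfolding W_def by auto
    also have "\<dots> = \<rho> g *\<^sub>v (M *\<^sub>v w)" using comm[OF g] M carr[OF g] w unfolding W_def by auto
    also have "\<dots> = c \<cdot>\<^sub>v (\<rho> g *\<^sub>v w)" using w carr[OF g] unfolding W_def by (auto simp: mult_mat_vec)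
    finally show ?thesis using w carr[OF g] unfolding W_def by auto
  qed
  have "is_subspace d W" unfolding W_def using M by (rule eigenspace_is_subspace)
  moreover have "\<forall>g\<in>carrier G. \<forall>w\<in>W. \<rho> g *\<^sub>v w \<in> W" using invariant by blast
  ultimately have "W = {0\<^sub>v d} \<or> W = carrier_vec d"
    using irr unfolding is_irr_rep_def by blast
  moreover have "v \<in> W" "v \<noteq> 0\<^sub>v d" using v M unfolding eigenvector_def W_def by auto
  ultimately have W: "W = carrier_vec d" by (elim disjE) simp_all
  have "M *\<^sub>v w = c \<cdot>\<^sub>v w" if "w \<in> carrier_vec d" for w
  proof -
    have "w \<in> W" using W that by simp
    then show ?thesis unfolding W_def by simp
  qed
  then show ?thesis using mat_eq_smult_one_matI[OF M] by blast
qed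

context group
begin

lemma is_rep_inv:
  assumes "is_rep G d \<rho>" "x \<in> carrier G"
  shows "\<rho> (inv x) * \<rho> x = 1\<^sub>m d" "\<rho> x * \<rho> (inv x) = 1\<^sub>m d"
  using is_repD[OF assms(1)] assms(2) by (metis inv_closed l_inv r_inv)+

lemma is_rep_pow:
  assumes "is_rep G d \<rho>" "x \<in> carrier G"
  shows "\<rho> (x [^] (n::nat)) = \<rho> x ^\<^sub>m n"
proof (induct n)
  case 0
  have "dim_row (\<rho> x) = d" using is_repD(1)[OF assms] by (rule carrier_matD)
  then show ?case using is_repD(2)[OF assms(1)] by simp
next
  case (Suc n) then show ?case using is_repD[OF assms(1)] assms(2) by simp
qed

lemma is_rep_kernel_subgroup:
  assumes rep: "is_rep G d \<rho>"
  shows "subgroup {g \<in> carrier G. \<rho> g = 1\<^sub>m d} G"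
proof (rule subgroupI)
  show "{g \<in> carrier G. \<rho> g = 1\<^sub>m d} \<noteq> {}" using is_repD(2)[OF rep] by blast
next
  fix g assume "g \<in> {g \<in> carrier G. \<rho> g = 1\<^sub>m d}"
  then have g: "g \<in> carrier G" "\<rho> g = 1\<^sub>m d" by auto
  then have "\<rho> (inv g) = \<rho> (inv g) * \<rho> g" using is_repD(1)[OF rep inv_closed[OF g(1)]] by simp
  also have "\<dots> = 1\<^sub>m d" using is_rep_inv(1)[OF rep g(1)] .
  finally show "inv g \<in> {g \<in> carrier G. \<rho> g = 1\<^sub>m d}" using g by simp
next
  fix g h assume "g \<in> {g \<in> carrier G. \<rho> g = 1\<^sub>m d}" "h \<in> {g \<in> carrier G. \<rho> g = 1\<^sub>m d}"
  then show "g \<otimes> h \<in> {g \<in> carrier G. \<rho> g = 1\<^sub>m d}" using is_repD(3)[OF rep] by simp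
qed auto

lemma is_rep_commutator_eq_one_iff:
  assumes rep: "is_rep G d \<rho>" and g: "g \<in> carrier G" and h: "h \<in> carrier G"
  shows "\<rho> (g \<otimes> h \<otimes> inv g \<otimes> inv h) = 1\<^sub>m d \<longleftrightarrow> \<rho> g * \<rho> h = \<rho> h * \<rho> g"
proof -
  define x y where "x = g \<otimes> h" and "y = h \<otimes> g"
  have xy: "x \<in> carrier G" "y \<in> carrier G" unfolding x_def y_def using g h by auto
  note hom = is_repD(3)[OF rep]
  have carr: "\<rho> x \<in> carrier_mat d d" "\<rho> y \<in> carrier_mat d d" "\<rho> (inv y) \<in> carrier_mat d d"
    using is_repD(1)[OF rep] xy by auto
  have "g \<otimes> h \<otimes> inv g \<otimes> inv h = x \<otimes> inv y"
    unfolding x_def y_def using g h by (simp add: inv_mult_group m_assoc)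
  then have "\<rho> (g \<otimes> h \<otimes> inv g \<otimes> inv h) = 1\<^sub>m d \<longleftrightarrow> \<rho> x * \<rho> (inv y) = 1\<^sub>m d"
    using xy hom by simp
  also have "\<dots> \<longleftrightarrow> \<rho> x = \<rho> y"
  proof
    assume one: "\<rho> x * \<rho> (inv y) = 1\<^sub>m d"
    have "\<rho> x = \<rho> x * (\<rho> (inv y) * \<rho> y)" using is_rep_inv(1)[OF rep xy(2)] carr by simp
    also have "\<dots> = (\<rho> x * \<rho> (inv y)) * \<rho> y" using carr by (simp add: assoc_mult_mat)
    finally show "\<rho> x = \<rho> y" using one carr by simp
  next
    assume "\<rho> x = \<rho> y"
    then show "\<rho> x * \<rho> (inv y) = 1\<^sub>m d" using is_rep_inv(2)[OF rep xy(2)] by simp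
  qed
  also have "\<dots> \<longleftrightarrow> \<rho> g * \<rho> h = \<rho> h * \<rho> g"
    unfolding x_def y_def using g h hom by simp
  finally show ?thesis .
qed

lemma comm_subgroup_subset_is_rep_kernel:
  assumes rep: "is_rep G d \<rho>" and H: "H \<subseteq> {g \<in> carrier G. \<exists>c. \<rho> g = c \<cdot>\<^sub>m 1\<^sub>m d}"
  shows "comm_subgroup G H (carrier G) \<subseteq> {g \<in> carrier G. \<rho> g = 1\<^sub>m d}"
  unfolding comm_subgroup_def
proof (rule generate_subgroup_incl[OF _ is_rep_kernel_subgroup[OF rep]], intro subsetI)
  fix s assume "s \<in> {y \<otimes> h \<otimes> inv y \<otimes> inv h | y h. y \<in> H \<and> h \<in> carrier G}"
  then obtain y h c where s: "s = y \<otimes> h \<otimes> inv y \<otimes> inv h" and h: "h \<in> carrier G"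
    and y: "y \<in> carrier G" "\<rho> y = c \<cdot>\<^sub>m 1\<^sub>m d"
    using H by blast
  have "\<rho> y * \<rho> h = \<rho> h * \<rho> y" using smult_one_mat_mult_comm[OF is_repD(1)[OF rep h]] y by simp
  then show "s \<in> {g \<in> carrier G. \<rho> g = 1\<^sub>m d}"
    using is_rep_commutator_eq_one_iff[OF rep y(1) h] s y(1) h by simp
qed

lemma is_rep_commute_if_rcos_central:
  assumes rep: "is_rep G d \<rho>" and "N \<lhd> G" and kernel: "N \<subseteq> {g \<in> carrier G. \<rho> g = 1\<^sub>m d}"
    and "N #> g \<in> group_center (G Mod N)" "g \<in> carrier G" "h \<in> carrier G"
  shows "\<rho> g * \<rho> h = \<rho> h * \<rho> g"
proof -
  have "g \<otimes> h \<otimes> inv g \<otimes> inv h \<in> N"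
    using rcos_in_group_center_FactGroup_iff[OF assms(2,5)] assms(4,6) by blast
  then show ?thesis using kernel is_rep_commutator_eq_one_iff[OF rep assms(5,6)] by blast
qed

end

subsection \<open>The centre of an irreducible character\<close>

lemma char_center_eq_scalars:
  fixes G (structure)
  assumes "group G" "finite (carrier G)" "is_irr_rep G d \<rho>"
    and \<chi>: "\<And>g. g \<in> carrier G \<Longrightarrow> \<chi> g = mat_trace (\<rho> g)"
  shows "char_center G \<chi> = {g \<in> carrier G. \<exists>c. \<rho> g = c \<cdot>\<^sub>m 1\<^sub>m d}"
proof -
  interpret group G by fact
  have rep: "is_rep G d \<rho>" and "d > 0" using assms(3) unfolding is_irr_rep_def by auto
  note carr = is_repD(1)[OF rep]
  have \<chi>_one: "\<chi> \<one> = of_nat d"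
    using \<chi>[of \<one>] is_repD(2)[OF rep] by (simp add: mat_trace_def)
  define m where "m = Coset.order G"
  have "m > 0" unfolding m_def using assms(2) order_gt_0_iff_finite by blast
  have pow: "\<rho> g ^\<^sub>m m = 1\<^sub>m d" if "g \<in> carrier G" for g
    using is_rep_pow[OF rep that, of m] pow_order_eq_1[OF that] is_repD(2)[OF rep]
    unfolding m_def by simp
  have "complex_of_real (cmod (\<chi> g)) = of_nat d \<longleftrightarrow> (\<exists>c. \<rho> g = c \<cdot>\<^sub>m 1\<^sub>m d)"
    if g: "g \<in> carrier G" for g
  proof
    assume "complex_of_real (cmod (\<chi> g)) = of_nat d"
    then have "cmod (mat_trace (\<rho> g)) = d" using \<chi>[OF g] by (metis of_real_eq_iff of_real_of_nat_eq)
    then show "\<exists>c. \<rho> g = c \<cdot>\<^sub>m 1\<^sub>m d"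
      using scalar_if_pow_eq_one_norm_mat_trace[OF carr[OF g] \<open>m > 0\<close> pow[OF g]] by simp
  next
    assume "\<exists>c. \<rho> g = c \<cdot>\<^sub>m 1\<^sub>m d"
    then obtain c where c: "\<rho> g = c \<cdot>\<^sub>m 1\<^sub>m d" by blast
    have "(c ^ m) \<cdot>\<^sub>m 1\<^sub>m d = (1\<^sub>m d :: complex mat)"
      using pow[OF g] unfolding c smult_one_mat_pow .
    then have "((c ^ m) \<cdot>\<^sub>m 1\<^sub>m d) $$ (0, 0) = (1\<^sub>m d :: complex mat) $$ (0, 0)"
      by (rule arg_cong)
    then have "c ^ m = 1" using \<open>d > 0\<close> by simp
    then have "cmod c ^ m = 1" by (metis norm_one norm_power)
    then have "cmod c = 1" using \<open>m > 0\<close> power_eq_imp_eq_base[of "cmod c" m 1] by simp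
    then show "complex_of_real (cmod (\<chi> g)) = of_nat d"
      using \<chi>[OF g] c by (simp add: mat_trace_smult_one_mat norm_mult)
  qed
  then show ?thesis unfolding char_center_def \<chi>_one by blast
qed

theorem lemma2p5:
  fixes G :: "('g, 'b) monoid_scheme" (structure)
  assumes "group G" and "finite (carrier G)" and "nested G"
    and "\<chi> \<in> Irr G"
  defines "Y \<equiv> char_center G \<chi>"
  defines "N \<equiv> comm_subgroup G Y (carrier G)"
  shows "(\<lambda>x. N #>\<^bsub>G\<^esub> x) ` Y = group_center (G Mod N)"
proof -
  interpret group G by fact
  from assms(4) obtain d \<rho> where irr: "is_irr_rep G d \<rho>"
    and \<chi>: "\<And>g. g \<in> carrier G \<Longrightarrow> \<chi> g = mat_trace (\<rho> g)"
    unfolding Irr_def by blast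
  have rep: "is_rep G d \<rho>" using irr unfolding is_irr_rep_def by blast
  have Y: "Y = {g \<in> carrier G. \<exists>c. \<rho> g = c \<cdot>\<^sub>m 1\<^sub>m d}"
    unfolding Y_def using char_center_eq_scalars[OF assms(1,2) irr \<chi>] .
  then have "Y \<subseteq> carrier G" by blast
  have normal: "N \<lhd> G" unfolding N_def using \<open>Y \<subseteq> carrier G\<close> by (rule comm_subgroup_normal)
  have kernel: "N \<subseteq> {g \<in> carrier G. \<rho> g = 1\<^sub>m d}"
    unfolding N_def using rep by (rule comm_subgroup_subset_is_rep_kernel) (simp add: Y)
  show ?thesis
  proof (intro equalityI subsetI)
    fix z assume "z \<in> (\<lambda>x. N #> x) ` Y"
    then show "z \<in> group_center (G Mod N)"
      unfolding N_def using rcos_in_group_center_comm_subgroup[OF \<open>Y \<subseteq> carrier G\<close>] by blast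
  next
    fix z assume z: "z \<in> group_center (G Mod N)"
    then obtain g where g: "g \<in> carrier G" "z = N #> g"
      unfolding group_center_def carrier_FactGroup by blast
    have "\<exists>c. \<rho> g = c \<cdot>\<^sub>m 1\<^sub>m d"
      by (rule schur_lemma[OF irr is_repD(1)[OF rep g(1)]])
        (use is_rep_commute_if_rcos_central[OF rep normal kernel] z g in blast)
    then show "z \<in> (\<lambda>x. N #> x) ` Y" using g Y by blast
  qed
qed

end
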